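(* Assume the Nested Logit model without outside option described in the context satisfies Assumptions 1 and 2, and suppose the true choice probabilities $\phi(i,S)$ are known for all $S \in \mathcal{S} \cup \{[n]\}$ and $i \in S$ (so all boost factors are known exactly). Then the matrix $E$ returned by Algorithm 2 (described in the context) satisfies $E[i,j] = \mathbf{1}(N(i) = N(j))$ for all $i \neq j$ in $[n]$, except possibly when $|N(i)| = |N(j)| = 1$, in which case $E[i,j]$ may equal $1$.
   Context: Items: $[n]=\{1,\dots,n\}$ with $n\ge 2$. Experiment design: fix an integer base $b \ge 2$, let $L = \lceil \log_b n \rceil$, fix an injective map $\sigma: [n] \to \{0,\dots,b-1\}^L$ with coordinates $\sigma_\ell(i)$, let $S_{\ell,-d} = \{i \in [n] : \sigma_\ell(i) \neq d\}$ for $\ell \in \{1,\dots,L\}$, $d \in \{0,\dots,b-1\}$, and $\mathcal{S} = \{S_{\ell,-d}\}_{\ell,d}$; the control assortment $[n]$ is also offered. Nested Logit model without outside option: $\mathcal{N}$ is a partition of $[n]$ into nests, $N(i)$ the nest containing $i$; weights $v_i > 0$; parameters $\lambda_N \in [0,1]$, with an extra weight $v_N>0$ when $\lambda_N=0$. $v_N(S) = (\sum_{i \in N \cap S} v_i)^{\lambda_N}$ if $\lambda_N \in (0,1]$, $v_N(S) = v_N \mathbf{1}(N \cap S \neq \emptyset)$ if $\lambda_N = 0$. For $i \in S$, $\phi(i,S) = \frac{v_{N(i)}(S)}{\sum_{N \in \mathcal{N}} v_N(S)} \cdot \frac{v_i}{\sum_{j \in N(i) \cap S} v_j}$. Boost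 factor: $\mathsf{BF}(i,S) = \phi(i,S)/\phi(i,[n])$. Multiplier: $\mathsf{Mult}(N,S) = \left(\frac{\sum_{j \in N} v_j}{\sum_{j \in N \cap S} v_j}\right)^{1-\lambda_N}$. Assumption 1: $\lambda_N = 1$ iff $|N| = 1$. Assumption 2: for every $S \in \mathcal{S}$ and distinct nests $N \neq N'$ with $\emptyset \neq N \cap S \neq N$ and $\emptyset \neq N' \cap S \neq N'$, $\mathsf{Mult}(N,S) \neq \mathsf{Mult}(N',S)$. Algorithm 2 maintains a symmetric matrix $E$ with entries $E[i,j] \in \{0,1,\text{null}\}$ for $i \neq j$ (every assignment to $E[i,j]$ is also made to $E[j,i]$), initially all null. (1) For each $S \in \mathcal{S}$ and each pair of distinct $i,j \in S$: if $\mathsf{BF}(i,S) \neq \mathsf{BF}(j,S)$ set $E[i,j] \gets 0$; else if $\mathsf{BF}(i,S) = \mathsf{BF}(j,S) > \min_{k \in S} \mathsf{BF}(k,S)$ set $E[i,j] \gets 1$. (2) For each $S \in \mathcal{S}$ in turn (any order), let $\mathsf{minBF}(S) = \arg\min_{k \in S}\mathsf{BF}(k,S)$; if $E[i,j] = 0$ for some distinct $i,j \in \mathsf{minBF}(S)$, set $E[i,k] \gets 0$ for all $i \in \mathsf{minBF}(S)$ and all $k \notin S$; otherwise set $E[i,j] \gets 1$ for all distinct $i,j \in \mathsf{minBF}(S)$. (3) One-hop transitivity: compute the set of pairs $(i,j)$ with $E[i,j] = \text{null}$ for which some $k \notin \{i,j\}$ has $E[i,k] = E[j,k] = 1$, and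 set all these entries to $1$. (4) Identify missing pairs: compute the set of pairs $(i,j)$ with $E[i,j] = \text{null}$ such that $E[i,k] \neq 1$ and $E[j,k] \neq 1$ for all $k \notin \{i,j\}$, and set all these entries to $1$. (5) Set every remaining null entry to $0$ and return $E$. *)

theory Defs
  imports Complex_Main "HOL-Library.Disjoint_Sets"
begin

text \<open>Items are [n] = {1..n}. The digit map sigma is given by its coordinates:
  sigma i l is the l-th digit (l in {1..L}) of item i.\<close>

definition numL :: "nat \<Rightarrow> nat \<Rightarrow> nat" where
  "numL b n = nat \<lceil>log (real b) (real n)\<rceil>"

definition valid_code :: "nat \<Rightarrow> nat \<Rightarrow> (nat \<Rightarrow> nat \<Rightarrow> nat) \<Rightarrow> bool" where
  "valid_code n b sigma \<longleftrightarrow>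
     (\<forall>i\<in>{1..n}. \<forall>l\<in>{1..numL b n}. sigma i l < b) \<and>
     (\<forall>i\<in>{1..n}. \<forall>j\<in>{1..n}. (\<forall>l\<in>{1..numL b n}. sigma i l = sigma j l) \<longrightarrow> i = j)"

definition Sdig :: "nat \<Rightarrow> (nat \<Rightarrow> nat \<Rightarrow> nat) \<Rightarrow> nat \<Rightarrow> nat \<Rightarrow> nat set" where
  "Sdig n sigma l d = {i \<in> {1..n}. sigma i l \<noteq> d}"

definition design :: "nat \<Rightarrow> nat \<Rightarrow> (nat \<Rightarrow> nat \<Rightarrow> nat) \<Rightarrow> nat set set" where
  "design n b sigma = {Sdig n sigma l d | l d. l \<in> {1..numL b n} \<and> d < b}"

definition nest_of :: "nat set set \<Rightarrow> nat \<Rightarrow> nat set" where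
  "nest_of Ns i = (THE N. N \<in> Ns \<and> i \<in> N)"

definition nest_val :: "(nat \<Rightarrow> real) \<Rightarrow> (nat set \<Rightarrow> real) \<Rightarrow> (nat set \<Rightarrow> real)
     \<Rightarrow> nat set \<Rightarrow> nat set \<Rightarrow> real" where
  "nest_val v lam vN N S =
     (if lam N = 0 then (if N \<inter> S \<noteq> {} then vN N else 0)
      else (\<Sum>j\<in>N \<inter> S. v j) powr lam N)"

definition phi :: "nat set set \<Rightarrow> (nat \<Rightarrow> real) \<Rightarrow> (nat set \<Rightarrow> real) \<Rightarrow> (nat set \<Rightarrow> real)
     \<Rightarrow> nat \<Rightarrow> nat set \<Rightarrow> real" where
  "phi Ns v lam vN i S =
     nest_val v lam vN (nest_of Ns i) S / (\<Sum>N\<in>Ns. nest_val v lam vN N S)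
     * (v i / (\<Sum>j\<in>nest_of Ns i \<inter> S. v j))"

definition BF :: "nat \<Rightarrow> nat set set \<Rightarrow> (nat \<Rightarrow> real) \<Rightarrow> (nat set \<Rightarrow> real) \<Rightarrow> (nat set \<Rightarrow> real)
     \<Rightarrow> nat \<Rightarrow> nat set \<Rightarrow> real" where
  "BF n Ns v lam vN i S = phi Ns v lam vN i S / phi Ns v lam vN i {1..n}"

definition Mult :: "(nat \<Rightarrow> real) \<Rightarrow> (nat set \<Rightarrow> real) \<Rightarrow> nat set \<Rightarrow> nat set \<Rightarrow> real" where
  "Mult v lam N S = ((\<Sum>j\<in>N. v j) / (\<Sum>j\<in>N \<inter> S. v j)) powr (1 - lam N)"

text \<open>Matrix entries: None = null, Some True = 1, Some False = 0.\<close>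
type_synonym emat = "nat \<Rightarrow> nat \<Rightarrow> bool option"

definition minBF :: "(nat \<Rightarrow> nat set \<Rightarrow> real) \<Rightarrow> nat set \<Rightarrow> nat set" where
  "minBF bf S = {k \<in> S. bf k S = Min ((\<lambda>k. bf k S) ` S)}"

definition step1_one :: "(nat \<Rightarrow> nat set \<Rightarrow> real) \<Rightarrow> nat set \<Rightarrow> emat \<Rightarrow> emat" where
  "step1_one bf S E = (\<lambda>a c.
     if a \<in> S \<and> c \<in> S \<and> a \<noteq> c then
       (if bf a S \<noteq> bf c S then Some False
        else if bf a S > Min ((\<lambda>k. bf k S) ` S) then Some True
        else E a c)
     else E a c)"

definition step2_one :: "nat \<Rightarrow> (nat \<Rightarrow> nat set \<Rightarrow> real) \<Rightarrow> nat set \<Rightarrow> emat \<Rightarrow> emat" where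
  "step2_one n bf S E =
     (let M = minBF bf S in
      if \<exists>i\<in>M. \<exists>j\<in>M. i \<noteq> j \<and> E i j = Some False then
        (\<lambda>a c. if (a \<in> M \<and> c \<in> {1..n} - S) \<or> (c \<in> M \<and> a \<in> {1..n} - S) then Some False
               else E a c)
      else
        (\<lambda>a c. if a \<in> M \<and> c \<in> M \<and> a \<noteq> c then Some True else E a c))"

definition step3 :: "nat \<Rightarrow> emat \<Rightarrow> emat" where
  "step3 n E = (\<lambda>a c.
     if a \<in> {1..n} \<and> c \<in> {1..n} \<and> a \<noteq> c \<and> E a c = None \<and>
        (\<exists>k\<in>{1..n}. k \<noteq> a \<and> k \<noteq> c \<and> E a k = Some True \<and> E c k = Some True)
     then Some True else E a c)"

definition step4 :: "nat \<Rightarrow> emat \<Rightarrow> emat" where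
  "step4 n E = (\<lambda>a c.
     if a \<in> {1..n} \<and> c \<in> {1..n} \<and> a \<noteq> c \<and> E a c = None \<and>
        (\<forall>k\<in>{1..n}. k \<noteq> a \<and> k \<noteq> c \<longrightarrow> E a k \<noteq> Some True \<and> E c k \<noteq> Some True)
     then Some True else E a c)"

definition step5 :: "nat \<Rightarrow> emat \<Rightarrow> emat" where
  "step5 n E = (\<lambda>a c.
     if a \<in> {1..n} \<and> c \<in> {1..n} \<and> a \<noteq> c \<and> E a c = None then Some False else E a c)"

text \<open>Algorithm 2: ord1 / ord2 are the orders in which the assortments of the design
  are processed in steps (1) and (2) (lists enumerating the design).\<close>
definition algorithm2 :: "nat \<Rightarrow> (nat \<Rightarrow> nat set \<Rightarrow> real) \<Rightarrow> nat set list \<Rightarrow> nat set list \<Rightarrow> emat" where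
  "algorithm2 n bf ord1 ord2 =
     (let E1 = fold (step1_one bf) ord1 (\<lambda>_ _. None);
          E2 = fold (step2_one n bf) ord2 E1
      in step5 n (step4 n (step3 n E2)))"

end

(*
  On an assortment S the boost factor of item i factors as BF(i, S) = c(S) * Mult(N(i), S) with
  c(S) > 0 independent of i; Mult(N, S) = 1 if the nest N lies inside S, and Mult(N, S) > 1 if S
  cuts N (Assumption 1), different cut nests having different multipliers (Assumption 2).  Hence
  on every S boost factors are constant on nests, minimal on the nests contained in S, and a nest
  cut by S is told apart from every other nest.  These three facts alone make every entry that
  Algorithm 2 writes correct, up to 1-entries between two singleton nests.

  Completeness comes from the design: for x \<noteq> y, a digit at which x and y differ yields an
  assortment that contains one of x, y but not the other, and also contains any prescribed third
  item z.  With this, step (1) separates every non-singleton nest from every outside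
  item by some 0-entry (which keeps step (2) sound), steps (1)-(3) join all pairs inside nests of
  size at least 3, and steps (4)-(5) settle the two-element nests and the remaining pairs.
*)

theory Submission
  imports Defs
begin

lemma fold_establishes:
  assumes "x \<in> set xs"
    and pres_P: "\<And>y E. y \<in> set xs \<Longrightarrow> P E \<Longrightarrow> P (f y E)"
    and pres_Q: "\<And>y E. y \<in> set xs \<Longrightarrow> P E \<Longrightarrow> Q E \<Longrightarrow> Q (f y E)"
    and est_Q: "\<And>E. P E \<Longrightarrow> Q (f x E)"
    and "P E0"
  shows "Q (fold f xs E0)"
proof -
  obtain ys zs where xs: "xs = ys @ x # zs"
    using split_list[OF assms(1)] by blast
  define E where "E = f x (fold f ys E0)"
  have "P (fold f ys E0)"
    by (rule fold_invariant[where Q = "\<lambda>y. y \<in> set xs"]) (use xs pres_P \<open>P E0\<close> in auto)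
  then have "P E \<and> Q E"
    unfolding E_def using pres_P est_Q \<open>x \<in> set xs\<close> by blast
  then have "P (fold f zs E) \<and> Q (fold f zs E)"
    by (intro fold_invariant[where Q = "\<lambda>y. y \<in> set xs" and P = "\<lambda>E. P E \<and> Q E"])
      (use xs pres_P pres_Q in auto)
  then show ?thesis
    using xs unfolding E_def by simp
qed

lemma nest_of_eq:
  assumes "partition_on A P" "N \<in> P" "x \<in> N"
  shows "nest_of P x = N"
  unfolding nest_of_def
proof (rule the_equality)
  show "N' = N" if "N' \<in> P \<and> x \<in> N'" for N'
    using that assms partition_onD2 by (metis disjointD disjoint_iff)
qed (use assms in simp)

lemma nest_of_mem:
  assumes "partition_on A P" "x \<in> A"
  shows "nest_of P x \<in> P" "x \<in> nest_of P x"
proof -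
  obtain N where "N \<in> P" "x \<in> N"
    using assms partition_onD1 by blast
  then show "nest_of P x \<in> P" "x \<in> nest_of P x"
    using nest_of_eq[OF assms(1)] by simp_all
qed

section \<open>Separating designs\<close>

definition separating_design :: "nat set \<Rightarrow> nat set set \<Rightarrow> bool" where
  "separating_design A D \<longleftrightarrow>
     (\<forall>x\<in>A. \<forall>y\<in>A. \<forall>z\<in>A. x \<noteq> y \<longrightarrow>
        (\<exists>S\<in>D. x \<in> S \<and> z \<in> S \<and> y \<notin> S) \<or> (\<exists>S\<in>D. y \<in> S \<and> z \<in> S \<and> x \<notin> S))"

lemma design_subset: "S \<in> design n b sigma \<Longrightarrow> S \<subseteq> {1..n}"
  unfolding design_def Sdig_def by auto

lemma design_separating:
  assumes "valid_code n b sigma"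
  shows "separating_design {1..n} (design n b sigma)"
  unfolding separating_design_def
proof (intro ballI impI)
  fix x y z assume xyz: "x \<in> {1..n}" "y \<in> {1..n}" "z \<in> {1..n}" and "x \<noteq> y"
  then obtain l where l: "l \<in> {1..numL b n}" "sigma x l \<noteq> sigma y l"
    using assms unfolding valid_code_def by blast
  have Sdig_in: "Sdig n sigma l (sigma w l) \<in> design n b sigma" if "w \<in> {1..n}" for w
    using that l(1) assms unfolding design_def valid_code_def by blast
  show "(\<exists>S\<in>design n b sigma. x \<in> S \<and> z \<in> S \<and> y \<notin> S) \<or>
        (\<exists>S\<in>design n b sigma. y \<in> S \<and> z \<in> S \<and> x \<notin> S)"
  proof (cases "sigma z l = sigma y l")
    case True
    let ?S = "Sdig n sigma l (sigma x l)"
    have "y \<in> ?S" "z \<in> ?S" "x \<notin> ?S"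
      using xyz l(2) True unfolding Sdig_def by auto
    then show ?thesis
      using Sdig_in[OF xyz(1)] by blast
  next
    case False
    let ?S = "Sdig n sigma l (sigma y l)"
    have "x \<in> ?S" "z \<in> ?S" "y \<notin> ?S"
      using xyz l(2) False unfolding Sdig_def by auto
    then show ?thesis
      using Sdig_in[OF xyz(2)] by blast
  qed
qed

section \<open>Boost factors of the nested logit model\<close>

locale nested_logit =
  fixes n :: nat and Ns :: "nat set set" and v :: "nat \<Rightarrow> real"
    and lam vN :: "nat set \<Rightarrow> real"
  assumes partition: "partition_on {1..n} Ns"
    and v_pos: "\<And>i. i \<in> {1..n} \<Longrightarrow> 0 < v i"
    and lam_range: "\<And>N. N \<in> Ns \<Longrightarrow> 0 \<le> lam N \<and> lam N \<le> 1"
    and vN_pos: "\<And>N. N \<in> Ns \<Longrightarrow> lam N = 0 \<Longrightarrow> 0 < vN N"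
begin

lemma nest_subset: "N \<in> Ns \<Longrightarrow> N \<subseteq> {1..n}"
  using partition_onD1[OF partition] by blast

lemma nest_in: "x \<in> {1..n} \<Longrightarrow> nest_of Ns x \<in> Ns"
  and nest_mem: "x \<in> {1..n} \<Longrightarrow> x \<in> nest_of Ns x"
  using nest_of_mem[OF partition] by auto

lemma sum_v_pos: "A \<subseteq> {1..n} \<Longrightarrow> A \<noteq> {} \<Longrightarrow> 0 < sum v A"
  by (meson finite_atLeastAtMost finite_subset subsetD sum_pos v_pos)

lemma sum_v_Int_less:
  assumes "N \<in> Ns" "\<not> N \<subseteq> S"
  shows "sum v (N \<inter> S) < sum v N"
proof -
  have "finite N"
    using assms(1) nest_subset finite_subset by blast
  then have "sum v N = sum v (N \<inter> S) + sum v (N - S)"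
    by (metis sum.Int_Diff)
  moreover have "0 < sum v (N - S)"
    using assms nest_subset by (intro sum_v_pos) auto
  ultimately show ?thesis
    by simp
qed

lemma nest_val_pos:
  assumes "N \<in> Ns" "N \<inter> S \<noteq> {}"
  shows "0 < nest_val v lam vN N S"
proof -
  have "0 < sum v (N \<inter> S)"
    using assms nest_subset by (intro sum_v_pos) auto
  then show ?thesis
    using assms vN_pos[of N] unfolding nest_val_def by auto
qed

lemma nest_val_nonneg: "N \<in> Ns \<Longrightarrow> 0 \<le> nest_val v lam vN N S"
  using vN_pos[of N] unfolding nest_val_def by auto

definition denom :: "nat set \<Rightarrow> real" where
  "denom S = (\<Sum>N\<in>Ns. nest_val v lam vN N S)"

lemma denom_pos:
  assumes "x \<in> S" "S \<subseteq> {1..n}"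
  shows "0 < denom S"
proof -
  have x: "nest_of Ns x \<in> Ns" "x \<in> nest_of Ns x"
    using nest_in nest_mem assms by auto
  have "finite Ns"
    using finite_elements[OF _ partition] by simp
  then have "nest_val v lam vN (nest_of Ns x) S \<le> denom S"
    unfolding denom_def using x(1) nest_val_nonneg by (intro member_le_sum) auto
  moreover have "0 < nest_val v lam vN (nest_of Ns x) S"
    using x assms(1) by (intro nest_val_pos) auto
  ultimately show ?thesis
    by linarith
qed

definition scale :: "nat set \<Rightarrow> real" where
  "scale S = denom {1..n} / denom S"

lemma scale_pos: "x \<in> S \<Longrightarrow> S \<subseteq> {1..n} \<Longrightarrow> 0 < scale S"
  unfolding scale_def using denom_pos[of x S] denom_pos[of x "{1..n}"] by auto

lemma nest_val_ratio:
  assumes "N \<in> Ns" "N \<inter> S \<noteq> {}"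
  shows "nest_val v lam vN N S / nest_val v lam vN N {1..n} = (sum v (N \<inter> S) / sum v N) powr lam N"
proof -
  have "N \<inter> {1..n} = N"
    using nest_subset[OF assms(1)] by blast
  moreover have "0 < sum v (N \<inter> S)" "0 < sum v N"
    using assms nest_subset[OF assms(1)] by (auto intro!: sum_v_pos)
  ultimately show ?thesis
    using assms vN_pos[of N] unfolding nest_val_def by (auto simp: powr_divide)
qed

lemma BF_eq_Mult:
  assumes "x \<in> S" "S \<subseteq> {1..n}"
  shows "BF n Ns v lam vN x S = scale S * Mult v lam (nest_of Ns x) S"
proof -
  define N where "N = nest_of Ns x"
  have N: "N \<in> Ns" "x \<in> N"
    unfolding N_def using nest_in nest_mem assms by auto
  have "N \<subseteq> {1..n}"
    using nest_subset[OF N(1)] .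
  then have "N \<inter> {1..n} = N"
    by blast
  have pos: "0 < sum v (N \<inter> S)" "0 < sum v N" "0 < v x" "0 < denom S" "0 < denom {1..n}"
    "0 < nest_val v lam vN N {1..n}"
    using \<open>N \<subseteq> {1..n}\<close> N assms v_pos[of x] denom_pos[OF assms] denom_pos[of x "{1..n}"]
      nest_val_pos[OF N(1), of "{1..n}"] by (auto intro!: sum_v_pos)
  have "BF n Ns v lam vN x S = denom {1..n} / denom S
          * (nest_val v lam vN N S / nest_val v lam vN N {1..n}) * (sum v N / sum v (N \<inter> S))"
    unfolding BF_def phi_def N_def[symmetric] denom_def[symmetric] \<open>N \<inter> {1..n} = N\<close>
    using pos by (simp add: field_simps)
  also have "\<dots> = scale S * Mult v lam N S"
  proof -
    have ratio: "nest_val v lam vN N S / nest_val v lam vN N {1..n}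
        = (sum v (N \<inter> S) / sum v N) powr lam N"
      using nest_val_ratio[OF N(1)] N assms(1) by blast
    have "(sum v (N \<inter> S) / sum v N) powr lam N * (sum v N / sum v (N \<inter> S)) = Mult v lam N S"
      unfolding Mult_def using pos(1,2) by (simp add: powr_diff powr_divide field_simps)
    then show ?thesis
      unfolding scale_def using ratio by (metis mult.assoc)
  qed
  finally show ?thesis
    unfolding N_def .
qed

lemma Mult_eq_1:
  assumes "N \<in> Ns" "N \<subseteq> S"
  shows "Mult v lam N S = 1"
proof -
  have "0 < sum v N"
    using assms(1) nest_subset partition_onD3[OF partition] by (intro sum_v_pos) auto
  then show ?thesis
    using assms(2) unfolding Mult_def by (simp add: Int_absorb2)
qed

lemma Mult_ge_1:
  assumes "N \<in> Ns" "N \<inter> S \<noteq> {}"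
  shows "1 \<le> Mult v lam N S"
proof -
  have "0 < sum v (N \<inter> S)"
    using assms nest_subset[OF assms(1)] by (intro sum_v_pos) auto
  moreover have "sum v (N \<inter> S) \<le> sum v N"
  proof (rule sum_mono2)
    show "finite N"
      using nest_subset[OF assms(1)] finite_subset by blast
    show "0 \<le> v i" if "i \<in> N - N \<inter> S" for i
      using that nest_subset[OF assms(1)] v_pos by (meson DiffD1 less_imp_le subsetD)
  qed auto
  ultimately show ?thesis
    using lam_range[OF assms(1)] unfolding Mult_def by (simp add: ge_one_powr_ge_zero)
qed

lemma Mult_gt_1:
  assumes "N \<in> Ns" "N \<inter> S \<noteq> {}" "\<not> N \<subseteq> S" "lam N \<noteq> 1"
  shows "1 < Mult v lam N S"
proof -
  have "0 < sum v (N \<inter> S)"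
    using assms nest_subset[OF assms(1)] by (intro sum_v_pos) auto
  then have "1 < sum v N / sum v (N \<inter> S)"
    using sum_v_Int_less[OF assms(1,3)] by simp
  moreover have "0 < 1 - lam N"
    using lam_range[OF assms(1)] assms(4) by simp
  ultimately show ?thesis
    unfolding Mult_def by simp
qed

lemma BF_same_nest:
  "x \<in> S \<Longrightarrow> y \<in> S \<Longrightarrow> S \<subseteq> {1..n} \<Longrightarrow> nest_of Ns x = nest_of Ns y
    \<Longrightarrow> BF n Ns v lam vN x S = BF n Ns v lam vN y S"
  by (simp add: BF_eq_Mult)

lemma BF_full_nest_le:
  assumes "x \<in> S" "y \<in> S" "S \<subseteq> {1..n}" "nest_of Ns x \<subseteq> S"
  shows "BF n Ns v lam vN x S \<le> BF n Ns v lam vN y S"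
proof -
  have xn: "x \<in> {1..n}" and yn: "y \<in> {1..n}"
    using assms by auto
  have "Mult v lam (nest_of Ns x) S = 1"
    by (rule Mult_eq_1[OF nest_in[OF xn] assms(4)])
  moreover have "1 \<le> Mult v lam (nest_of Ns y) S"
    by (rule Mult_ge_1[OF nest_in[OF yn]]) (use nest_mem[OF yn] assms(2) in blast)
  ultimately show ?thesis
    unfolding BF_eq_Mult[OF assms(1,3)] BF_eq_Mult[OF assms(2,3)]
    using scale_pos[OF assms(1,3)] by simp
qed

lemma BF_partial_nest_neq:
  assumes "x \<in> S" "y \<in> S" "S \<subseteq> {1..n}"
    and partial: "\<not> nest_of Ns x \<subseteq> S" and "nest_of Ns y \<noteq> nest_of Ns x"
    and A1: "\<And>N. N \<in> Ns \<Longrightarrow> card N \<noteq> 1 \<Longrightarrow> lam N \<noteq> 1"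
    and A2: "\<And>N N'. N \<in> Ns \<Longrightarrow> N' \<in> Ns \<Longrightarrow> N \<noteq> N' \<Longrightarrow> N \<inter> S \<noteq> {} \<Longrightarrow> \<not> N \<subseteq> S
      \<Longrightarrow> N' \<inter> S \<noteq> {} \<Longrightarrow> \<not> N' \<subseteq> S \<Longrightarrow> Mult v lam N S \<noteq> Mult v lam N' S"
  shows "BF n Ns v lam vN x S \<noteq> BF n Ns v lam vN y S"
proof -
  have "x \<in> {1..n}" "y \<in> {1..n}"
    using assms by auto
  then have x: "nest_of Ns x \<in> Ns" "nest_of Ns x \<inter> S \<noteq> {}"
    and y: "nest_of Ns y \<in> Ns" "nest_of Ns y \<inter> S \<noteq> {}"
    using assms(1,2) nest_in nest_mem by auto
  have "Mult v lam (nest_of Ns x) S \<noteq> Mult v lam (nest_of Ns y) S"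
  proof (cases "nest_of Ns y \<subseteq> S")
    case True
    have "card (nest_of Ns x) \<noteq> 1"
      using x(2) partial by (auto simp: card_1_singleton_iff)
    then have "1 < Mult v lam (nest_of Ns x) S"
      using x partial A1 by (intro Mult_gt_1) auto
    then show ?thesis
      using Mult_eq_1[OF y(1) True] by simp
  next
    case False
    then show ?thesis
      using A2 x y partial assms(5) by metis
  qed
  then show ?thesis
    unfolding BF_eq_Mult[OF assms(1,3)] BF_eq_Mult[OF assms(2,3)]
    using scale_pos[OF assms(1,3)] by simp
qed

end

section \<open>Recovering the nests from boost factors\<close>

definition symmetric :: "emat \<Rightarrow> bool" where
  "symmetric E \<longleftrightarrow> (\<forall>a c. E a c = E c a)"

lemma symmetric_empty: "symmetric (\<lambda>_ _. None)"
  unfolding symmetric_def by simp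

definition decided :: "emat \<Rightarrow> (nat \<times> nat) set" where
  "decided E = {(a, c). E a c \<noteq> None}"

abbreviation has_zero_pair :: "emat \<Rightarrow> nat set \<Rightarrow> bool" where
  "has_zero_pair E M \<equiv> \<exists>i\<in>M. \<exists>j\<in>M. i \<noteq> j \<and> E i j = Some False"

locale nest_recovery =
  fixes n :: nat and Ns :: "nat set set" and D :: "nat set set"
    and bf :: "nat \<Rightarrow> nat set \<Rightarrow> real"
  assumes partition: "partition_on {1..n} Ns"
    and design_subset: "\<And>S. S \<in> D \<Longrightarrow> S \<subseteq> {1..n}"
    and separating: "separating_design {1..n} D"
    and bf_same_nest: "\<And>S x y. S \<in> D \<Longrightarrow> x \<in> S \<Longrightarrow> y \<in> S \<Longrightarrow> nest_of Ns x = nest_of Ns y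
      \<Longrightarrow> bf x S = bf y S"
    and bf_full_nest_le: "\<And>S x y. S \<in> D \<Longrightarrow> x \<in> S \<Longrightarrow> y \<in> S \<Longrightarrow> nest_of Ns x \<subseteq> S
      \<Longrightarrow> bf x S \<le> bf y S"
    and bf_partial_nest_neq: "\<And>S x y. S \<in> D \<Longrightarrow> x \<in> S \<Longrightarrow> y \<in> S \<Longrightarrow> \<not> nest_of Ns x \<subseteq> S
      \<Longrightarrow> nest_of Ns y \<noteq> nest_of Ns x \<Longrightarrow> bf x S \<noteq> bf y S"
begin

abbreviation nest :: "nat \<Rightarrow> nat set" where
  "nest \<equiv> nest_of Ns"

lemma nest_in: "x \<in> {1..n} \<Longrightarrow> nest x \<in> Ns"
  and nest_mem: "x \<in> {1..n} \<Longrightarrow> x \<in> nest x"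
  using nest_of_mem[OF partition] by auto

lemma nest_subset: "x \<in> {1..n} \<Longrightarrow> nest x \<subseteq> {1..n}"
  using nest_in partition_onD1[OF partition] by blast

lemma nest_eq: "x \<in> {1..n} \<Longrightarrow> y \<in> nest x \<Longrightarrow> nest y = nest x"
  by (rule nest_of_eq[OF partition nest_in])

lemma nest_eq_iff: "x \<in> {1..n} \<Longrightarrow> y \<in> {1..n} \<Longrightarrow> nest y = nest x \<longleftrightarrow> y \<in> nest x"
  using nest_eq nest_mem by blast

lemma singleton_nest_eq:
  assumes "x \<in> {1..n}" "card (nest x) = 1" "y \<in> nest x"
  shows "y = x"
proof -
  obtain a where "nest x = {a}"
    using assms(2) card_1_singletonE by blast
  then show ?thesis
    using assms(3) nest_mem[OF assms(1)] by simp
qed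

lemma other_in_nest:
  assumes "x \<in> {1..n}" "card (nest x) \<noteq> 1"
  shows "\<exists>y\<in>nest x. y \<noteq> x"
proof (rule ccontr)
  assume "\<not> (\<exists>y\<in>nest x. y \<noteq> x)"
  then have "nest x = {x}"
    using nest_mem[OF assms(1)] by blast
  then show False
    using assms(2) by simp
qed

lemma separatingD:
  "x \<in> {1..n} \<Longrightarrow> y \<in> {1..n} \<Longrightarrow> z \<in> {1..n} \<Longrightarrow> x \<noteq> y \<Longrightarrow>
    (\<exists>S\<in>D. x \<in> S \<and> z \<in> S \<and> y \<notin> S) \<or> (\<exists>S\<in>D. y \<in> S \<and> z \<in> S \<and> x \<notin> S)"
  using separating[unfolded separating_design_def, rule_format] .

lemma minBF_subset: "S \<in> D \<Longrightarrow> minBF bf S \<subseteq> {1..n}"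
  using design_subset unfolding minBF_def by blast

lemma minBF_iff:
  assumes "S \<in> D"
  shows "x \<in> minBF bf S \<longleftrightarrow> x \<in> S \<and> (\<forall>y\<in>S. bf x S \<le> bf y S)"
proof -
  have "finite S"
    using design_subset[OF assms] finite_subset by blast
  then have "bf x S = Min ((\<lambda>k. bf k S) ` S) \<longleftrightarrow> (\<forall>y\<in>S. bf x S \<le> bf y S)" if "x \<in> S"
    using that by (auto intro!: antisym Min.boundedI)
  then show ?thesis
    unfolding minBF_def by blast
qed

lemma Min_less_bf_iff:
  assumes "S \<in> D" "x \<in> S"
  shows "Min ((\<lambda>k. bf k S) ` S) < bf x S \<longleftrightarrow> x \<notin> minBF bf S"
proof -
  have "finite S"
    using design_subset[OF assms(1)] finite_subset by blast
  then have "Min ((\<lambda>k. bf k S) ` S) \<le> bf x S"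
    using assms(2) by simp
  then show ?thesis
    using assms(2) unfolding minBF_def by auto
qed

lemma full_nest_minBF: "S \<in> D \<Longrightarrow> x \<in> S \<Longrightarrow> nest x \<subseteq> S \<Longrightarrow> x \<in> minBF bf S"
  using minBF_iff bf_full_nest_le by blast

lemma minBF_partial_nest:
  assumes "S \<in> D" "x \<in> minBF bf S" "\<not> nest x \<subseteq> S" "y \<in> minBF bf S"
  shows "nest y = nest x"
proof -
  have "x \<in> S" "y \<in> S" "bf x S = bf y S"
    using assms minBF_iff by (auto intro: antisym)
  then show ?thesis
    using bf_partial_nest_neq assms(1,3) by blast
qed

lemma above_min_same_nest:
  assumes "S \<in> D" "x \<in> S" "y \<in> S" "x \<notin> minBF bf S" "bf x S = bf y S"
  shows "nest y = nest x"
  using assms full_nest_minBF bf_partial_nest_neq by blast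

definition admissible :: "nat \<Rightarrow> nat \<Rightarrow> bool \<Rightarrow> bool" where
  "admissible a c t \<longleftrightarrow>
     (if t then nest a = nest c \<or> card (nest a) = 1 \<and> card (nest c) = 1 else nest a \<noteq> nest c)"

definition sound :: "emat \<Rightarrow> bool" where
  "sound E \<longleftrightarrow> (\<forall>a\<in>{1..n}. \<forall>c\<in>{1..n}. \<forall>t. a \<noteq> c \<longrightarrow> E a c = Some t \<longrightarrow> admissible a c t)"

lemma sound_empty: "sound (\<lambda>_ _. None)"
  unfolding sound_def by simp

lemma soundD:
  assumes "sound E" "a \<in> {1..n}" "c \<in> {1..n}" "a \<noteq> c" "E a c = Some t"
  shows "admissible a c t"
  using assms(1)[unfolded sound_def, rule_format, OF assms(2-5)] .

lemma sound_entry: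
  assumes "sound E" "a \<in> {1..n}" "c \<in> {1..n}" "a \<noteq> c"
    and "\<not> (card (nest a) = 1 \<and> card (nest c) = 1)" "(a, c) \<in> decided E"
  shows "E a c = Some (nest a = nest c)"
proof -
  obtain t where t: "E a c = Some t"
    using assms(6) unfolding decided_def by auto
  then have "admissible a c t"
    using soundD assms(1-4) by blast
  then have "t = (nest a = nest c)"
    using assms(5) unfolding admissible_def by (cases t) auto
  then show ?thesis
    using t by simp
qed

lemma sound_update:
  assumes "sound E"
    and "\<And>a c t. a \<in> {1..n} \<Longrightarrow> c \<in> {1..n} \<Longrightarrow> a \<noteq> c \<Longrightarrow> E' a c = Some t \<Longrightarrow> E' a c \<noteq> E a c
      \<Longrightarrow> admissible a c t"
  shows "sound E'"
  using assms unfolding sound_def by metis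

lemma step1_sound:
  assumes S: "S \<in> D" and "sound E"
  shows "sound (step1_one bf S E)"
proof (rule sound_update[OF \<open>sound E\<close>])
  fix a c t
  assume "a \<noteq> c" "step1_one bf S E a c = Some t" "step1_one bf S E a c \<noteq> E a c"
  then have ac: "a \<in> S" "c \<in> S"
    and t: "t \<longleftrightarrow> bf a S = bf c S" "t \<Longrightarrow> Min ((\<lambda>k. bf k S) ` S) < bf a S"
    unfolding step1_one_def by (auto split: if_splits)
  show "admissible a c t"
  proof (cases t)
    case True
    then show ?thesis
      using above_min_same_nest[OF S ac] t Min_less_bf_iff[OF S ac(1)] unfolding admissible_def by auto
  next
    case False
    then show ?thesis
      using bf_same_nest[OF S ac] t unfolding admissible_def by auto
  qed
qed

lemma step1_symmetric:
  assumes "symmetric E"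
  shows "symmetric (step1_one bf S E)"
  unfolding symmetric_def
proof (intro allI)
  fix a c
  have "E a c = E c a"
    using assms unfolding symmetric_def by blast
  then show "step1_one bf S E a c = step1_one bf S E c a"
    unfolding step1_one_def
    by (cases "bf a S = bf c S") (simp_all add: not_sym[of "bf a S"])
qed

lemma step1_decided_mono: "decided E \<subseteq> decided (step1_one bf S E)"
  unfolding decided_def step1_one_def by (auto split: if_splits)

lemma step1_decides:
  assumes "S \<in> D" "a \<in> S" "c \<in> S" "a \<noteq> c" "bf a S \<noteq> bf c S \<or> a \<notin> minBF bf S"
  shows "(a, c) \<in> decided (step1_one bf S E)"
  using assms Min_less_bf_iff[OF assms(1,2)] unfolding decided_def step1_one_def by auto

end

locale algorithm2_run = nest_recovery +
  fixes ord1 ord2 :: "nat set list"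
  assumes set_ord1: "set ord1 = D" and set_ord2: "set ord2 = D"
begin

definition E1 :: emat where
  "E1 = fold (step1_one bf) ord1 (\<lambda>_ _. None)"

lemma E1_sound: "sound E1" and E1_symmetric: "symmetric E1"
proof -
  have "sound E1 \<and> symmetric E1"
    unfolding E1_def
    by (rule fold_invariant[where Q = "\<lambda>S. S \<in> D" and P = "\<lambda>E. sound E \<and> symmetric E"])
      (use set_ord1 step1_sound step1_symmetric sound_empty symmetric_empty in auto)
  then show "sound E1" "symmetric E1"
    by simp_all
qed

lemma E1_decides:
  assumes "S \<in> D" "a \<in> S" "c \<in> S" "a \<noteq> c" "bf a S \<noteq> bf c S \<or> a \<notin> minBF bf S"
  shows "(a, c) \<in> decided E1"
  unfolding E1_def
  by (rule fold_establishes[where P = "\<lambda>_. True" and Q = "\<lambda>E. (a, c) \<in> decided E" and x = S])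
    (use assms set_ord1 step1_decided_mono step1_decides in auto)

lemma E1_separates_nest:
  assumes a: "a \<in> {1..n}" "card (nest a) \<noteq> 1" and c: "c \<in> {1..n}" "c \<notin> nest a"
  shows "\<exists>p\<in>nest a. (p, c) \<in> decided E1"
proof -
  obtain a' where a': "a' \<in> nest a" "a' \<noteq> a"
    using other_in_nest[OF a] by blast
  have "a' \<in> {1..n}"
    using a' nest_subset[OF a(1)] by blast
  have decides: "(p, c) \<in> decided E1"
    if "S \<in> D" "p \<in> nest a" "p \<in> S" "c \<in> S" "\<not> nest a \<subseteq> S" for S p
  proof -
    have p: "p \<in> {1..n}" "nest p = nest a"
      using that(2) nest_subset[OF a(1)] nest_eq[OF a(1)] by auto
    then have "nest c \<noteq> nest p"
      using c nest_eq_iff[OF a(1)] by auto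
    then have "bf p S \<noteq> bf c S"
      using bf_partial_nest_neq that p(2) by metis
    moreover have "p \<noteq> c"
      using that(2) c(2) by blast
    ultimately show ?thesis
      using E1_decides that(1,3,4) by blast
  qed
  show ?thesis
    using separatingD[OF a(1) \<open>a' \<in> {1..n}\<close> c(1) a'(2)[symmetric]] decides a' nest_mem[OF a(1)]
    by blast
qed

definition step2_invariant :: "emat \<Rightarrow> bool" where
  "step2_invariant E \<longleftrightarrow> sound E \<and> symmetric E \<and> decided E1 \<subseteq> decided E"

lemma zero_in_nest:
  assumes inv: "step2_invariant E"
    and a: "a \<in> {1..n}" "card (nest a) \<noteq> 1" and c: "c \<in> {1..n}" "c \<notin> nest a"
  shows "\<exists>p\<in>nest a. E p c = Some False"
proof -
  obtain p where p: "p \<in> nest a" "(p, c) \<in> decided E1"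
    using E1_separates_nest[OF a c] by blast
  have "p \<in> {1..n}" "nest p = nest a"
    using p(1) nest_subset[OF a(1)] nest_eq[OF a(1)] by auto
  moreover have "nest p \<noteq> nest c"
    using c nest_eq_iff[OF a(1)] \<open>nest p = nest a\<close> by auto
  moreover have "(p, c) \<in> decided E"
    using inv p(2) unfolding step2_invariant_def by blast
  ultimately have "E p c = Some False"
    using sound_entry[of E p c] inv a(2) c(1) unfolding step2_invariant_def by auto
  then show ?thesis
    using p(1) by blast
qed

lemma minBF_zero_pair_full_nests:
  assumes S: "S \<in> D" and "sound E"
    and ij: "i \<in> minBF bf S" "j \<in> minBF bf S" "i \<noteq> j" "E i j = Some False"
    and x: "x \<in> minBF bf S"
  shows "nest x \<subseteq> S"
proof (rule ccontr)
  assume "\<not> nest x \<subseteq> S"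
  then have "nest i = nest j"
    using minBF_partial_nest[OF S x] ij(1,2) by metis
  moreover have "i \<in> {1..n}" "j \<in> {1..n}"
    using ij(1,2) minBF_subset[OF S] by auto
  ultimately show False
    using soundD[OF \<open>sound E\<close> _ _ ij(3,4)] unfolding admissible_def by simp
qed

lemma minBF_pair_admissible:
  assumes S: "S \<in> D" and inv: "step2_invariant E"
    and no_zero: "\<not> has_zero_pair E (minBF bf S)"
    and ac: "a \<in> minBF bf S" "c \<in> minBF bf S"
  shows "admissible a c True"
proof -
  \<comment> \<open>Minimisers from different nests have their nests inside S, so a non-singleton one
    contains a minimiser with a 0-entry to the other, written in step (1).\<close>
  have singleton: "card (nest x) = 1"
    if xy: "x \<in> minBF bf S" "y \<in> minBF bf S" "nest x \<noteq> nest y" for x y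
  proof (rule ccontr)
    assume "card (nest x) \<noteq> 1"
    have full: "nest x \<subseteq> S"
      using minBF_partial_nest[OF S xy(1) _ xy(2)] xy(3) by metis
    have "x \<in> {1..n}" "y \<in> {1..n}"
      using xy minBF_subset[OF S] by auto
    moreover have "y \<notin> nest x"
      using xy(3) nest_eq_iff \<open>x \<in> {1..n}\<close> \<open>y \<in> {1..n}\<close> by metis
    ultimately obtain p where p: "p \<in> nest x" "E p y = Some False"
      using zero_in_nest[OF inv _ \<open>card (nest x) \<noteq> 1\<close>] by blast
    have "p \<in> minBF bf S"
      using full_nest_minBF[OF S] full p(1) nest_eq[OF \<open>x \<in> {1..n}\<close> p(1)] by auto
    moreover have "p \<noteq> y"
      using p(1) \<open>y \<notin> nest x\<close> by blast
    ultimately show False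
      using no_zero xy(2) p(2) by blast
  qed
  show ?thesis
    unfolding admissible_def using singleton ac by metis
qed

lemma step2_sound:
  assumes S: "S \<in> D" and inv: "step2_invariant E"
  shows "sound (step2_one n bf S E)"
proof -
  have "sound E"
    using inv unfolding step2_invariant_def by blast
  show ?thesis
  proof (cases "has_zero_pair E (minBF bf S)")
    case True
    then have full: "nest x \<subseteq> S" if "x \<in> minBF bf S" for x
      using minBF_zero_pair_full_nests[OF S \<open>sound E\<close> _ _ _ _ that] by blast
    show ?thesis
    proof (rule sound_update[OF \<open>sound E\<close>])
      fix a c t
      assume ac: "a \<in> {1..n}" "c \<in> {1..n}"
        and new: "step2_one n bf S E a c = Some t" "step2_one n bf S E a c \<noteq> E a c"
      then have "\<not> t" and cut: "a \<in> minBF bf S \<and> c \<notin> S \<or> c \<in> minBF bf S \<and> a \<notin> S"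
        using True unfolding step2_one_def Let_def by (auto split: if_splits)
      moreover have "nest a \<noteq> nest c"
        using cut full nest_mem ac by blast
      ultimately show "admissible a c t"
        unfolding admissible_def by simp
    qed
  next
    case False
    show ?thesis
    proof (rule sound_update[OF \<open>sound E\<close>])
      fix a c t
      assume "step2_one n bf S E a c = Some t" "step2_one n bf S E a c \<noteq> E a c"
      then have "t" "a \<in> minBF bf S" "c \<in> minBF bf S"
        using False unfolding step2_one_def Let_def by (auto split: if_splits)
      then show "admissible a c t"
        using minBF_pair_admissible[OF S inv False] by simp
    qed
  qed
qed

lemma step2_symmetric: "symmetric E \<Longrightarrow> symmetric (step2_one n bf S E)"
  unfolding symmetric_def step2_one_def Let_def by auto

lemma step2_decided_mono: "decided E \<subseteq> decided (step2_one n bf S E)"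
  unfolding decided_def step2_one_def Let_def by (auto split: if_splits)

lemma step2_preserves_invariant:
  "S \<in> D \<Longrightarrow> step2_invariant E \<Longrightarrow> step2_invariant (step2_one n bf S E)"
  using step2_sound step2_symmetric step2_decided_mono unfolding step2_invariant_def by blast

definition E2 :: emat where
  "E2 = fold (step2_one n bf) ord2 E1"

lemma E1_step2_invariant: "step2_invariant E1"
  using E1_sound E1_symmetric unfolding step2_invariant_def by blast

lemma E2_invariant: "step2_invariant E2"
  unfolding E2_def
  by (rule fold_invariant[where Q = "\<lambda>S. S \<in> D" and P = step2_invariant])
    (use set_ord2 step2_preserves_invariant E1_step2_invariant in auto)

lemma E2_sound: "sound E2" and E2_symmetric: "symmetric E2" and E1_decided_E2: "decided E1 \<subseteq> decided E2"
  using E2_invariant unfolding step2_invariant_def by auto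

lemma E2_establishes:
  assumes "S \<in> D" and "\<And>E. step2_invariant E \<Longrightarrow> Q (step2_one n bf S E)"
    and "\<And>E E'. Q E \<Longrightarrow> decided E \<subseteq> decided E' \<Longrightarrow> Q E'"
  shows "Q E2"
  unfolding E2_def
  by (rule fold_establishes[where P = step2_invariant and x = S])
    (use assms set_ord2 step2_preserves_invariant step2_decided_mono E1_step2_invariant in blast)+

lemma E2_partial_nest:
  assumes S: "S \<in> D" and ij: "i \<in> S" "j \<in> S" "i \<noteq> j" "nest j = nest i"
    and partial: "\<not> nest i \<subseteq> S"
  shows "E2 i j = Some True"
proof -
  have n: "i \<in> {1..n}" "j \<in> {1..n}"
    using ij design_subset[OF S] by auto
  have "card (nest i) \<noteq> 1"
    using singleton_nest_eq[OF n(1)] nest_mem[OF n(2)] ij(3,4) by metis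
  have "(i, j) \<in> decided E2"
  proof (cases "i \<in> minBF bf S")
    case False
    then show ?thesis
      using E1_decides[OF S ij(1-3)] E1_decided_E2 by blast
  next
    case True
    have "bf j S = bf i S"
      using bf_same_nest[OF S ij(2,1,4)] .
    then have "j \<in> minBF bf S"
      using True ij(2) minBF_iff[OF S] by simp
    show ?thesis
    proof (rule E2_establishes[OF S, where Q = "\<lambda>E. (i, j) \<in> decided E"])
      fix E
      assume inv: "step2_invariant E"
      have no_zero: "\<not> has_zero_pair E (minBF bf S)"
        using minBF_zero_pair_full_nests[OF S _ _ _ _ _ True] inv partial
        unfolding step2_invariant_def by blast
      have "step2_one n bf S E i j = Some True"
        unfolding step2_one_def Let_def if_not_P[OF no_zero] using True \<open>j \<in> minBF bf S\<close> ij(3) by simp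
      then show "(i, j) \<in> decided (step2_one n bf S E)"
        unfolding decided_def by blast
    qed blast
  qed
  then show ?thesis
    using sound_entry[OF E2_sound n ij(3)] \<open>card (nest i) \<noteq> 1\<close> ij(4) by simp
qed

lemma E2_two_element_nest:
  assumes i: "i \<in> {1..n}" and ik: "nest i = {i, k}" "k \<noteq> i"
    and x: "x \<in> {1..n}" "x \<notin> nest i"
  shows "E2 i k = Some True \<or> E2 i x = Some False"
proof -
  have k: "k \<in> {1..n}" "nest k = nest i"
    using ik nest_subset[OF i] nest_eq[OF i] by auto
  have "x \<noteq> k" "x \<noteq> i"
    using x(2) ik(1) by auto
  have "nest x \<noteq> nest i"
    using x nest_eq_iff[OF i] by blast
  have "card (nest i) \<noteq> 1"
    using ik by simp
  have "(i, k) \<in> decided E2 \<or> (i, x) \<in> decided E2"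
    using separatingD[OF x(1) k(1) i \<open>x \<noteq> k\<close>]
  proof (elim disjE bexE conjE)
    fix S assume S: "S \<in> D" "x \<in> S" "i \<in> S" "k \<notin> S"
    then have "bf i S \<noteq> bf x S"
      using bf_partial_nest_neq[OF S(1,3,2)] \<open>nest x \<noteq> nest i\<close> ik(1) by blast
    then have "(i, x) \<in> decided E1"
      using E1_decides[OF S(1,3,2)] \<open>x \<noteq> i\<close> by blast
    then show ?thesis
      using E1_decided_E2 by blast
  next
    fix S assume S: "S \<in> D" "k \<in> S" "i \<in> S" "x \<notin> S"
    have "nest i \<subseteq> S"
      using ik(1) S(2,3) by simp
    then have iM: "i \<in> minBF bf S" and kM: "k \<in> minBF bf S"
      using full_nest_minBF[OF S(1)] S(2,3) k(2) by auto
    show ?thesis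
    proof (rule E2_establishes[OF S(1), where Q = "\<lambda>E. (i, k) \<in> decided E \<or> (i, x) \<in> decided E"])
      fix E
      show "(i, k) \<in> decided (step2_one n bf S E) \<or> (i, x) \<in> decided (step2_one n bf S E)"
      proof (cases "has_zero_pair E (minBF bf S)")
        case True
        have "step2_one n bf S E i x = Some False"
          unfolding step2_one_def Let_def if_P[OF True] using iM x(1) S(4) by simp
        then show ?thesis
          unfolding decided_def by blast
      next
        case False
        have "step2_one n bf S E i k = Some True"
          unfolding step2_one_def Let_def if_not_P[OF False] using iM kM ik(2) by simp
        then show ?thesis
          unfolding decided_def by blast
      qed
    qed blast
  qed
  moreover have "(i, k) \<in> decided E2 \<Longrightarrow> E2 i k = Some True"
    using sound_entry[OF E2_sound i k(1) ik(2)[symmetric]] k(2) \<open>card (nest i) \<noteq> 1\<close> by simp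
  moreover have "(i, x) \<in> decided E2 \<Longrightarrow> E2 i x = Some False"
    using sound_entry[OF E2_sound i x(1) \<open>x \<noteq> i\<close>[symmetric]] \<open>nest x \<noteq> nest i\<close> \<open>card (nest i) \<noteq> 1\<close>
    by (simp add: eq_commute[of "nest x"])
  ultimately show ?thesis
    by blast
qed

lemma step3_sound:
  assumes "sound E"
  shows "sound (step3 n E)"
proof (rule sound_update[OF assms])
  fix a c t
  assume ac: "a \<in> {1..n}" "c \<in> {1..n}" "a \<noteq> c"
    and new: "step3 n E a c = Some t" "step3 n E a c \<noteq> E a c"
  have filled: "E a c = None \<and> (\<exists>k\<in>{1..n}. k \<noteq> a \<and> k \<noteq> c \<and> E a k = Some True \<and> E c k = Some True)"
  proof (rule ccontr)
    assume "\<not> ?thesis"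
    then have "step3 n E a c = E a c"
      unfolding step3_def by auto
    then show False
      using new(2) by contradiction
  qed
  then have "step3 n E a c = Some True"
    unfolding step3_def using ac by simp
  then have t: "t"
    using new(1) by simp
  obtain k where k: "k \<in> {1..n}" "k \<noteq> a" "k \<noteq> c" "E a k = Some True" "E c k = Some True"
    using filled by blast
  then have ak: "admissible a k True" and ck: "admissible c k True"
    using soundD[OF assms] ac by auto
  show "admissible a c t"
  proof (cases "card (nest k) = 1")
    case True
    then have "a \<notin> nest k" "c \<notin> nest k"
      using singleton_nest_eq[OF k(1) True] k(2,3) by auto
    then have "nest a \<noteq> nest k" "nest c \<noteq> nest k"
      using nest_eq_iff[OF k(1)] ac(1,2) by auto
    then have "card (nest a) = 1" "card (nest c) = 1"
      using ak ck unfolding admissible_def by simp_all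
    then show ?thesis
      using t unfolding admissible_def by simp
  next
    case False
    then have "nest a = nest k" "nest c = nest k"
      using ak ck unfolding admissible_def by simp_all
    then show ?thesis
      using t unfolding admissible_def by simp
  qed
qed

lemma step3_symmetric:
  assumes "symmetric E"
  shows "symmetric (step3 n E)"
  unfolding symmetric_def
proof (intro allI)
  fix a c
  have "E a c = E c a"
    using assms unfolding symmetric_def by blast
  moreover have "(\<exists>k\<in>{1..n}. k \<noteq> a \<and> k \<noteq> c \<and> E a k = Some True \<and> E c k = Some True) \<longleftrightarrow>
      (\<exists>k\<in>{1..n}. k \<noteq> c \<and> k \<noteq> a \<and> E c k = Some True \<and> E a k = Some True)"
    by blast
  ultimately show "step3 n E a c = step3 n E c a"
    unfolding step3_def by auto
qed

lemma step3_keeps: "E a c \<noteq> None \<Longrightarrow> step3 n E a c = E a c"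
  unfolding step3_def by simp

definition E3 :: emat where
  "E3 = step3 n E2"

lemma E3_sound: "sound E3" and E3_symmetric: "symmetric E3"
  unfolding E3_def using step3_sound step3_symmetric E2_sound E2_symmetric by auto

lemma E3_keeps_E2: "E2 a c \<noteq> None \<Longrightarrow> E3 a c = E2 a c"
  unfolding E3_def by (rule step3_keeps)

lemma E3_large_nest:
  assumes i: "i \<in> {1..n}" and jk: "j \<in> nest i" "k \<in> nest i" "i \<noteq> j" "i \<noteq> k" "j \<noteq> k"
  shows "E3 i j = Some True"
proof -
  have n: "j \<in> {1..n}" "k \<in> {1..n}"
    using jk(1,2) nest_subset[OF i] by auto
  have pair: "E2 p q = Some True"
    if "S \<in> D" "p \<in> S" "q \<in> S" "r \<notin> S" "p \<noteq> q" "p \<in> nest i" "q \<in> nest i" "r \<in> nest i" for S p q r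
    using E2_partial_nest[OF that(1-3,5)] nest_eq[OF i] that(4,6-8) by blast
  have nests: "nest j = nest i" "card (nest i) \<noteq> 1"
    using nest_eq[OF i jk(1)] singleton_nest_eq[OF i _ jk(1)] jk(3) by auto
  \<comment> \<open>Either an assortment cuts k off from i and j, or both i and j are joined to k
    and step (3) closes the triangle.\<close>
  have jk_side: "E2 i j = Some True \<or> E2 j k = Some True"
    using separatingD[OF i n(2) n(1) jk(4)] pair nest_mem[OF i] jk(1,2,3,5) by metis
  have ik_side: "E2 i j = Some True \<or> E2 i k = Some True"
    using separatingD[OF n(1) n(2) i jk(5)] pair nest_mem[OF i] jk(1,2,3,4) by metis
  show ?thesis
  proof (cases "E2 i j = None")
    case True
    then have "E2 i k = Some True" "E2 j k = Some True"
      using jk_side ik_side by auto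
    then show ?thesis
      unfolding E3_def step3_def using True i n jk(3-5) by auto
  next
    case False
    then have "E2 i j = Some True"
      using sound_entry[OF E2_sound i n(1) jk(3)] nests unfolding decided_def by simp
    then show ?thesis
      using E3_keeps_E2[of i j] by simp
  qed
qed

lemma E3_witness:
  assumes i: "i \<in> {1..n}" "card (nest i) \<noteq> 1" and j: "j \<in> {1..n}" "j \<notin> nest i"
    and undecided: "E3 i j = None"
  shows "\<exists>k\<in>{1..n}. k \<noteq> i \<and> k \<noteq> j \<and> E3 i k = Some True"
proof -
  obtain k where k: "k \<in> nest i" "k \<noteq> i"
    using other_in_nest[OF i] by blast
  have "k \<in> {1..n}" "k \<noteq> j"
    using k(1) nest_subset[OF i(1)] j(2) by auto
  moreover have "E3 i k = Some True"
  proof (cases "\<exists>k'\<in>nest i. k' \<noteq> i \<and> k' \<noteq> k")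
    case True
    then show ?thesis
      using E3_large_nest[OF i(1) k(1)] k(2) by metis
  next
    case False
    then have "nest i = {i, k}"
      using k(1) nest_mem[OF i(1)] by blast
    then have "E2 i k = Some True \<or> E2 i j = Some False"
      using E2_two_element_nest[OF i(1) _ k(2) j] by blast
    then show ?thesis
      using undecided E3_keeps_E2 by fastforce
  qed
  ultimately show ?thesis
    using k(2) by blast
qed

lemma algorithm2_eq: "algorithm2 n bf ord1 ord2 = step5 n (step4 n E3)"
  unfolding algorithm2_def Let_def E3_def E2_def E1_def ..

lemma algorithm2_entry:
  assumes "i \<in> {1..n}" "j \<in> {1..n}" "i \<noteq> j"
  shows "algorithm2 n bf ord1 ord2 i j = Some (E3 i j = Some True \<or>
    E3 i j = None \<and> (\<forall>k\<in>{1..n}. k \<noteq> i \<and> k \<noteq> j \<longrightarrow> E3 i k \<noteq> Some True \<and> E3 j k \<noteq> Some True))"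
  using assms unfolding algorithm2_eq step5_def step4_def by (cases "E3 i j") auto

lemma algorithm2_same_nest:
  assumes i: "i \<in> {1..n}" "card (nest i) \<noteq> 1" and j: "j \<in> nest i" "j \<noteq> i"
  shows "algorithm2 n bf ord1 ord2 i j = Some True"
proof -
  have jn: "j \<in> {1..n}" "nest j = nest i"
    using j(1) nest_subset[OF i(1)] nest_eq[OF i(1)] by auto
  have "E3 i j = Some True \<or>
    E3 i j = None \<and> (\<forall>k\<in>{1..n}. k \<noteq> i \<and> k \<noteq> j \<longrightarrow> E3 i k \<noteq> Some True \<and> E3 j k \<noteq> Some True)"
  proof (cases "E3 i j = None")
    case False
    then have "(i, j) \<in> decided E3"
      unfolding decided_def by simp
    then show ?thesis
      using sound_entry[OF E3_sound i(1) jn(1) j(2)[symmetric]] i(2) jn(2) by simp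
  next
    case True
    have two: "nest i \<subseteq> {i, j}"
    proof
      fix k
      assume "k \<in> nest i"
      show "k \<in> {i, j}"
      proof (rule ccontr)
        assume "k \<notin> {i, j}"
        then have "E3 i j = Some True"
          using E3_large_nest[OF i(1) j(1) \<open>k \<in> nest i\<close>] j(2) by simp
        then show False
          using True by simp
      qed
    qed
    have "E3 p k \<noteq> Some True"
      if p: "p \<in> {i, j}" and k: "k \<in> {1..n}" "k \<noteq> i" "k \<noteq> j" for p k
    proof
      assume "E3 p k = Some True"
      moreover have "p \<in> {1..n}" "p \<noteq> k" "nest p = nest i"
        using p k i(1) jn by auto
      ultimately have "admissible p k True"
        using soundD[OF E3_sound] k(1) by blast
      then have "k \<in> nest i"
        using \<open>nest p = nest i\<close> i(2) nest_eq_iff[OF i(1) k(1)] unfolding admissible_def by simp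
      then show False
        using two k(2,3) by blast
    qed
    then show ?thesis
      using True by blast
  qed
  then show ?thesis
    using algorithm2_entry[OF i(1) jn(1) j(2)[symmetric]] by simp
qed

lemma algorithm2_other_nest:
  assumes i: "i \<in> {1..n}" and j: "j \<in> {1..n}" "j \<notin> nest i"
    and non_singleton: "card (nest i) \<noteq> 1 \<or> card (nest j) \<noteq> 1"
  shows "algorithm2 n bf ord1 ord2 i j = Some False"
proof -
  have "i \<noteq> j"
    using j(2) nest_mem[OF i] by blast
  have "nest i \<noteq> nest j"
    using j nest_eq_iff[OF i] by auto
  have "E3 i j \<noteq> Some True \<and>
    \<not> (E3 i j = None \<and> (\<forall>k\<in>{1..n}. k \<noteq> i \<and> k \<noteq> j \<longrightarrow> E3 i k \<noteq> Some True \<and> E3 j k \<noteq> Some True))"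
  proof (cases "E3 i j = None")
    case False
    then show ?thesis
      using sound_entry[OF E3_sound i j(1) \<open>i \<noteq> j\<close>] non_singleton \<open>nest i \<noteq> nest j\<close>
      unfolding decided_def by auto
  next
    case True
    have "\<exists>k\<in>{1..n}. k \<noteq> i \<and> k \<noteq> j \<and> (E3 i k = Some True \<or> E3 j k = Some True)"
    proof (cases "card (nest i) \<noteq> 1")
      case True
      then show ?thesis
        using E3_witness[OF i True j] \<open>E3 i j = None\<close> by blast
    next
      case False
      have "E3 j i = None"
        using \<open>E3 i j = None\<close> E3_symmetric unfolding symmetric_def by metis
      moreover have "i \<notin> nest j"
        using j nest_eq_iff[OF i] nest_eq_iff[OF j(1) i] \<open>nest i \<noteq> nest j\<close> by blast
      ultimately show ?thesis
        using E3_witness[OF j(1) _ i] False non_singleton by blast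
    qed
    then show ?thesis
      using True by auto
  qed
  then show ?thesis
    using algorithm2_entry[OF i j(1) \<open>i \<noteq> j\<close>] by simp
qed

lemma algorithm2_recovers_nests:
  "\<forall>i\<in>{1..n}. \<forall>j\<in>{1..n}. i \<noteq> j \<longrightarrow>
     (let E = algorithm2 n bf ord1 ord2 in
      if card (nest i) = 1 \<and> card (nest j) = 1
      then E i j = Some False \<or> E i j = Some True
      else E i j = Some (nest i = nest j))"
proof (intro ballI impI)
  fix i j
  assume ij: "i \<in> {1..n}" "j \<in> {1..n}" "i \<noteq> j"
  show "let E = algorithm2 n bf ord1 ord2 in
      if card (nest i) = 1 \<and> card (nest j) = 1
      then E i j = Some False \<or> E i j = Some True
      else E i j = Some (nest i = nest j)"
  proof (cases "card (nest i) = 1 \<and> card (nest j) = 1")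
    case True
    obtain b where "algorithm2 n bf ord1 ord2 i j = Some b"
      using algorithm2_entry[OF ij] by blast
    then show ?thesis
      using True by (cases b) (simp_all add: Let_def)
  next
    case False
    show ?thesis
    proof (cases "j \<in> nest i")
      case True
      then have "nest j = nest i"
        using nest_eq[OF ij(1)] by blast
      then show ?thesis
        using algorithm2_same_nest[OF ij(1) _ True ij(3)[symmetric]] False by (simp add: Let_def)
    next
      case False
      then have "nest i \<noteq> nest j"
        using nest_eq_iff[OF ij(1,2)] by blast
      then show ?thesis
        using algorithm2_other_nest[OF ij(1,2) False] \<open>\<not> (card (nest i) = 1 \<and> card (nest j) = 1)\<close>
        by (simp add: Let_def)
    qed
  qed
qed

end

lemma (in nested_logit) nest_recovery_BF:
  assumes "\<And>S. S \<in> D \<Longrightarrow> S \<subseteq> {1..n}" and "separating_design {1..n} D"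
    and A1: "\<And>N. N \<in> Ns \<Longrightarrow> card N \<noteq> 1 \<Longrightarrow> lam N \<noteq> 1"
    and A2: "\<And>S N N'. S \<in> D \<Longrightarrow> N \<in> Ns \<Longrightarrow> N' \<in> Ns \<Longrightarrow> N \<noteq> N' \<Longrightarrow> N \<inter> S \<noteq> {} \<Longrightarrow> \<not> N \<subseteq> S
      \<Longrightarrow> N' \<inter> S \<noteq> {} \<Longrightarrow> \<not> N' \<subseteq> S \<Longrightarrow> Mult v lam N S \<noteq> Mult v lam N' S"
  shows "nest_recovery n Ns D (BF n Ns v lam vN)"
proof
  fix S x y
  assume "S \<in> D" "x \<in> S" "y \<in> S"
  then have "S \<subseteq> {1..n}"
    using assms(1) by blast
  show "nest_of Ns x = nest_of Ns y \<Longrightarrow> BF n Ns v lam vN x S = BF n Ns v lam vN y S"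
    using BF_same_nest[OF \<open>x \<in> S\<close> \<open>y \<in> S\<close> \<open>S \<subseteq> {1..n}\<close>] .
  show "nest_of Ns x \<subseteq> S \<Longrightarrow> BF n Ns v lam vN x S \<le> BF n Ns v lam vN y S"
    using BF_full_nest_le[OF \<open>x \<in> S\<close> \<open>y \<in> S\<close> \<open>S \<subseteq> {1..n}\<close>] .
  show "\<not> nest_of Ns x \<subseteq> S \<Longrightarrow> nest_of Ns y \<noteq> nest_of Ns x
      \<Longrightarrow> BF n Ns v lam vN x S \<noteq> BF n Ns v lam vN y S"
    using BF_partial_nest_neq[OF \<open>x \<in> S\<close> \<open>y \<in> S\<close> \<open>S \<subseteq> {1..n}\<close> _ _ A1 A2[OF \<open>S \<in> D\<close>]] .
qed (use partition assms(1,2) in auto)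

theorem theorem4p8:
  fixes n b :: nat and sigma :: "nat \<Rightarrow> nat \<Rightarrow> nat"
    and Ns :: "nat set set" and v :: "nat \<Rightarrow> real"
    and lam vN :: "nat set \<Rightarrow> real"
    and ord1 ord2 :: "nat set list"
  assumes n2: "n \<ge> 2" and b2: "b \<ge> 2"
    and code: "valid_code n b sigma"
    and part: "partition_on {1..n} Ns"
    and vpos: "\<forall>i\<in>{1..n}. v i > 0"
    and lam_range: "\<forall>N\<in>Ns. 0 \<le> lam N \<and> lam N \<le> 1"
    and vNpos: "\<forall>N\<in>Ns. lam N = 0 \<longrightarrow> vN N > 0"
    and A1: "\<forall>N\<in>Ns. lam N = 1 \<longleftrightarrow> card N = 1"
    and A2: "\<forall>S\<in>design n b sigma. \<forall>N\<in>Ns. \<forall>N'\<in>Ns.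
               N \<noteq> N' \<and> N \<inter> S \<noteq> {} \<and> N \<inter> S \<noteq> N \<and> N' \<inter> S \<noteq> {} \<and> N' \<inter> S \<noteq> N'
               \<longrightarrow> Mult v lam N S \<noteq> Mult v lam N' S"
    and ord1: "distinct ord1" "set ord1 = design n b sigma"
    and ord2: "distinct ord2" "set ord2 = design n b sigma"
  shows "\<forall>i\<in>{1..n}. \<forall>j\<in>{1..n}. i \<noteq> j \<longrightarrow>
           (let E = algorithm2 n (BF n Ns v lam vN) ord1 ord2 in
            if card (nest_of Ns i) = 1 \<and> card (nest_of Ns j) = 1
            then E i j = Some False \<or> E i j = Some True
            else E i j = Some (nest_of Ns i = nest_of Ns j))"
proof -
  interpret nested_logit n Ns v lam vN
    using part vpos lam_range vNpos by unfold_locales auto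
  interpret nest_recovery n Ns "design n b sigma" "BF n Ns v lam vN"
    by (rule nest_recovery_BF) (use design_subset design_separating[OF code] A1 A2 in blast)+
  interpret algorithm2_run n Ns "design n b sigma" "BF n Ns v lam vN" ord1 ord2
    by unfold_locales (use ord1 ord2 in auto)
  show ?thesis
    using algorithm2_recovers_nests .
qed

end
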